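(* Algorithm B (defined in the context) has migration factor at most $\frac34$, and on every input whose optimal offline makespan is $1$ it produces a schedule with makespan at most $1.25$. Hence for every $M\ge\frac34$ there is a semi-online algorithm with migration factor $M$ and competitive ratio at most $\frac54$.
   Context: Model (two hierarchical machines with migration, bin stretching). Jobs $1,2,\dots,n$ arrive one by one ($n$ unknown in advance). Job $j$ has a size $p_j>0$ and a grade of service (GoS) $g_j\in\{1,2\}$; a job of GoS $1$ may only be processed on machine $m_1$, a job of GoS $2$ may be processed on $m_1$ or on $m_2$. The load of a machine is the total size of the jobs assigned to it, and the makespan is the maximum load. When job $j$ arrives, the algorithm must assign it to a machine, and at the same time it may reassign (migrate) previously arrived jobs to other machines (respecting the GoS constraints), provided that the total size of the migrated jobs is at most $M\cdot p_j$; $M\ge 0$ is the migration factor. Bin stretching: the optimal offline makespan of the complete input is known in advance and scaled to $1$. The competitive ratio is the supremum over inputs of (algorithm's makespan)/(optimal makespan). Notation: $Y_{j}$ is the set of jobs on $m_2$ just after job $j$ has been handled (including migrations), $y_j$ its total size, $y_0=0$. $p^{\max Y}_j$ and $p^{\max Y,2}_j$ are the largest and second largest sizes of jobs in $Y_{j-1}$ (each defined as $0$ if it does not exist), and $j^{\max Y}$ is a job of $Y_{j-1}$ of size $p^{\max Y}_j$. "Sorted $Y_{j-1}$" means the jobs of $Y_{j-1}$ listed in non-increasing order of size; $w_j$ denotes the total size of the set $W$ chosen when handling $j$. Algorithm B. On arrival of job $j$: Step 2: if $g_j=1$ or $y_{j-1}\ge 0.75$, assign $j$ to $m_1$. Step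 3: else if $y_{j-1}+p_j\le 1.25$, assign $j$ to $m_2$. Step 4: else if $p_j\ge 0.75$: let $W$ be the longest prefix of sorted $Y_{j-1}$ with total size at most $0.75p_j$ (possibly empty). If $y_{j-1}-w_j+p_j>1.25$, assign $j$ to $m_1$ (no migration); otherwise migrate the jobs of $W$ to $m_1$ and assign $j$ to $m_2$. Step 5: else (so $p_j<0.75$): if $p_j+p^{\max Y}_j>1.25$, assign $j$ to $m_1$. Otherwise choose $W$ as follows: if $p^{\max Y}_j\ge y_{j-1}/2$, let $W=Y_{j-1}\setminus\{j^{\max Y}\}$; if $0.25\le p^{\max Y}_j<y_{j-1}/2$, let $W=\{j^{\max Y}\}$; if $p^{\max Y}_j<0.25$, let $W$ be the shortest prefix of sorted $Y_{j-1}$ with total size at least $0.25$ (or all of $Y_{j-1}$ if none exists), and if then $w_j>0.75p_j$ replace $W$ by $Y_{j-1}\setminus W$. Migrate the jobs of $W$ to $m_1$ and assign $j$ to $m_2$. *)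

theory Defs
  imports Complex_Main
begin

text \<open>Jobs are indexed 0,1,...,n-1 (job j of the paper is job j-1 here).
  p i is the size and g i the grade of service of job i.
  A schedule of the first k jobs is given by the set Y of jobs on machine m2;
  the remaining jobs among the first k are on machine m1.\<close>

definition load :: "(nat \<Rightarrow> real) \<Rightarrow> nat set \<Rightarrow> real" where
  "load p A = (\<Sum>i\<in>A. p i)"

definition makespan :: "(nat \<Rightarrow> real) \<Rightarrow> nat \<Rightarrow> nat set \<Rightarrow> real" where
  "makespan p n S = max (load p ({..<n} - S)) (load p S)"

definition feasible :: "(nat \<Rightarrow> nat) \<Rightarrow> nat \<Rightarrow> nat set \<Rightarrow> bool" where
  "feasible g n S \<longleftrightarrow> S \<subseteq> {..<n} \<and> (\<forall>i\<in>S. g i = 2)"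

definition opt_makespan :: "(nat \<Rightarrow> real) \<Rightarrow> (nat \<Rightarrow> nat) \<Rightarrow> nat \<Rightarrow> real" where
  "opt_makespan p g n = Min (makespan p n ` {S. feasible g n S})"

definition pmax :: "(nat \<Rightarrow> real) \<Rightarrow> nat set \<Rightarrow> real" where
  "pmax p Y = (if Y = {} then 0 else Max (p ` Y))"

definition sorted_desc :: "(nat \<Rightarrow> real) \<Rightarrow> nat set \<Rightarrow> nat list \<Rightarrow> bool" where
  "sorted_desc p Y ys \<longleftrightarrow> distinct ys \<and> set ys = Y \<and> sorted_wrt (\<lambda>a b. p a \<ge> p b) ys"

definition longest_prefix_le :: "(nat \<Rightarrow> real) \<Rightarrow> nat set \<Rightarrow> real \<Rightarrow> nat set \<Rightarrow> bool" where
  "longest_prefix_le p Y c W \<longleftrightarrow>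
     (\<exists>ys k. sorted_desc p Y ys \<and> k \<le> length ys \<and>
        sum_list (map p (take k ys)) \<le> c \<and>
        (\<forall>k'. k < k' \<and> k' \<le> length ys \<longrightarrow> sum_list (map p (take k' ys)) > c) \<and>
        W = set (take k ys))"

definition shortest_prefix_ge :: "(nat \<Rightarrow> real) \<Rightarrow> nat set \<Rightarrow> real \<Rightarrow> nat set \<Rightarrow> bool" where
  "shortest_prefix_ge p Y c W \<longleftrightarrow>
     (\<exists>ys k. sorted_desc p Y ys \<and> k \<le> length ys \<and>
        ((sum_list (map p (take k ys)) \<ge> c \<and>
          (\<forall>k'. k' < k \<longrightarrow> sum_list (map p (take k' ys)) < c))
         \<or> (sum_list (map p ys) < c \<and> k = length ys)) \<and>
        W = set (take k ys))"

definition step5_W :: "(nat \<Rightarrow> real) \<Rightarrow> nat set \<Rightarrow> real \<Rightarrow> nat set \<Rightarrow> bool" where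
  "step5_W p Y pj W \<longleftrightarrow>
     (if pmax p Y \<ge> load p Y / 2 then
        (\<exists>jm. (jm \<in> Y \<and> p jm = pmax p Y \<or> Y = {}) \<and> W = Y - {jm})
      else if pmax p Y \<ge> 1/4 then
        (\<exists>jm. jm \<in> Y \<and> p jm = pmax p Y \<and> W = {jm})
      else
        (\<exists>W0. shortest_prefix_ge p Y (1/4) W0 \<and>
              W = (if load p W0 > 3/4 * pj then Y - W0 else W0)))"

text \<open>One step of Algorithm B: handling job j, given the set Y = Y_{j-1} of
  earlier jobs on m2, produces the new set Y' = Y_j of jobs on m2
  (migrations included). All possible tie-breakings are allowed.\<close>
definition B_step :: "(nat \<Rightarrow> real) \<Rightarrow> (nat \<Rightarrow> nat) \<Rightarrow> nat \<Rightarrow> nat set \<Rightarrow> nat set \<Rightarrow> bool" where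
  "B_step p g j Y Y' \<longleftrightarrow>
     (if g j = 1 \<or> load p Y \<ge> 3/4 then Y' = Y
      else if load p Y + p j \<le> 5/4 then Y' = insert j Y
      else if p j \<ge> 3/4 then
        (\<exists>W. longest_prefix_le p Y (3/4 * p j) W \<and>
             (if load p Y - load p W + p j > 5/4 then Y' = Y else Y' = insert j (Y - W)))
      else if p j + pmax p Y > 5/4 then Y' = Y
      else (\<exists>W. step5_W p Y (p j) W \<and> Y' = insert j (Y - W)))"

definition B_run :: "(nat \<Rightarrow> real) \<Rightarrow> (nat \<Rightarrow> nat) \<Rightarrow> nat \<Rightarrow> (nat \<Rightarrow> nat set) \<Rightarrow> bool" where
  "B_run p g n Ys \<longleftrightarrow> Ys 0 = {} \<and> (\<forall>j<n. B_step p g j (Ys j) (Ys (Suc j)))"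

definition migrated :: "(nat \<Rightarrow> real) \<Rightarrow> nat \<Rightarrow> nat set \<Rightarrow> nat set \<Rightarrow> real" where
  "migrated p j Y Y' = load p {i. i < j \<and> (i \<in> Y \<longleftrightarrow> i \<notin> Y')}"

end

theory Submission
  imports Defs
begin

text \<open>Each step of Algorithm B migrates at most 3/4 of the new job and keeps the load of m2
  at most 5/4, so only m1 needs an argument. Compare with a schedule S of makespan 1; the
  total load is then at most 2. Once m2 reaches load 3/4 it is frozen and m1 gets at most
  2 - 3/4. Otherwise Steps 4 and 5 never place a job (they would lift m2 to at least 3/4),
  so m2 only grows and every GoS-2 job left on m1 was rejected. A rejected job is larger
  than 1/2 and is certified by jobs on m2 that cannot share a machine with it in S. Hence at
  most one job is rejected (three jobs larger than 1/2 do not fit into S), and its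
  certificate, together with the GoS-1 jobs that S keeps on its first machine, bounds the
  load of m1 by 5/4.\<close>

lemma load_insert: "finite A \<Longrightarrow> j \<notin> A \<Longrightarrow> load p (insert j A) = p j + load p A"
  by (simp add: load_def)

lemma load_mono: "finite B \<Longrightarrow> A \<subseteq> B \<Longrightarrow> (\<And>i. i \<in> B \<Longrightarrow> 0 \<le> p i) \<Longrightarrow> load p A \<le> load p B"
  unfolding load_def by (rule sum_mono2) auto

lemma load_diff: "finite B \<Longrightarrow> A \<subseteq> B \<Longrightarrow> load p (B - A) = load p B - load p A"
  unfolding load_def by (simp add: sum_diff)

lemma load_union:
  "finite A \<Longrightarrow> finite B \<Longrightarrow> A \<inter> B = {} \<Longrightarrow> load p (A \<union> B) = load p A + load p B"
  unfolding load_def by (simp add: sum.union_disjoint)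

lemma load_set: "distinct xs \<Longrightarrow> load p (set xs) = sum_list (map p xs)"
  unfolding load_def by (simp add: sum_list_distinct_conv_sum_set)

lemma pmax_ge: "finite Y \<Longrightarrow> i \<in> Y \<Longrightarrow> p i \<le> pmax p Y"
  unfolding pmax_def by auto

lemma pmax_attained: "finite Y \<Longrightarrow> Y \<noteq> {} \<Longrightarrow> \<exists>i\<in>Y. p i = pmax p Y"
proof -
  assume "finite Y" "Y \<noteq> {}"
  then have "Max (p ` Y) \<in> p ` Y"
    by simp
  then show ?thesis
    using \<open>Y \<noteq> {}\<close> unfolding pmax_def by auto
qed

lemma pmax_empty [simp]: "pmax p {} = 0"
  by (simp add: pmax_def)

subsection \<open>Algorithm B can always be run\<close>

lemma sorted_desc_exists: "finite Y \<Longrightarrow> \<exists>ys. sorted_desc p Y ys"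
proof -
  assume "finite Y"
  define ys where "ys = sort_key (\<lambda>i. - p i) (sorted_list_of_set Y)"
  have "sorted (map (\<lambda>i. - p i) ys)"
    unfolding ys_def by (rule sorted_sort_key)
  then have "sorted_wrt (\<lambda>a b. p a \<ge> p b) ys"
    by (simp add: sorted_wrt_map)
  moreover have "distinct ys" "set ys = Y"
    using \<open>finite Y\<close> unfolding ys_def by auto
  ultimately show ?thesis
    unfolding sorted_desc_def by blast
qed

lemma longest_prefix_le_exists: "finite Y \<Longrightarrow> 0 \<le> c \<Longrightarrow> \<exists>W. longest_prefix_le p Y c W"
proof -
  assume "finite Y" "0 \<le> c"
  obtain ys where ys: "sorted_desc p Y ys"
    using sorted_desc_exists[OF \<open>finite Y\<close>] by blast
  define K where "K = {k. k \<le> length ys \<and> sum_list (map p (take k ys)) \<le> c}"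
  have "finite K" "K \<noteq> {}"
    using \<open>0 \<le> c\<close> unfolding K_def by auto
  then have "Max K \<in> K" and "\<And>k. k \<in> K \<Longrightarrow> k \<le> Max K"
    by auto
  then have "Max K \<le> length ys" "sum_list (map p (take (Max K) ys)) \<le> c"
    and "\<forall>k'. Max K < k' \<and> k' \<le> length ys \<longrightarrow> c < sum_list (map p (take k' ys))"
    unfolding K_def by (auto simp: not_le[symmetric])
  then show ?thesis
    unfolding longest_prefix_le_def using ys by blast
qed

lemma shortest_prefix_ge_exists: "finite Y \<Longrightarrow> \<exists>W. shortest_prefix_ge p Y c W"
proof -
  assume "finite Y"
  obtain ys where ys: "sorted_desc p Y ys"
    using sorted_desc_exists[OF \<open>finite Y\<close>] by blast
  show ?thesis
  proof (cases "sum_list (map p ys) < c")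
    case True
    then show ?thesis
      unfolding shortest_prefix_ge_def using ys by auto
  next
    case False
    define k where "k = (LEAST k. c \<le> sum_list (map p (take k ys)))"
    have full: "c \<le> sum_list (map p (take (length ys) ys))"
      using False by simp
    have "c \<le> sum_list (map p (take k ys))" "k \<le> length ys"
      unfolding k_def by (rule LeastI[where P = "\<lambda>k. c \<le> sum_list (map p (take k ys))", OF full],
        rule Least_le[where P = "\<lambda>k. c \<le> sum_list (map p (take k ys))", OF full])
    moreover have "\<forall>k'<k. sum_list (map p (take k' ys)) < c"
      using not_less_Least unfolding k_def by (metis not_le)
    ultimately show ?thesis
      unfolding shortest_prefix_ge_def using ys by blast
  qed
qed

lemma step5_W_exists: "finite Y \<Longrightarrow> \<exists>W. step5_W p Y pj W"
proof -
  assume fin: "finite Y"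
  show ?thesis
  proof (cases "Y = {}")
    case True
    then show ?thesis
      by (simp add: step5_W_def load_def)
  next
    case False
    then obtain jm where "jm \<in> Y" "p jm = pmax p Y"
      using pmax_attained[OF fin] by blast
    moreover obtain W0 where "shortest_prefix_ge p Y (1/4) W0"
      using shortest_prefix_ge_exists[OF fin] by blast
    ultimately show ?thesis
      unfolding step5_W_def
      by (cases "load p Y / 2 \<le> pmax p Y"; cases "1/4 \<le> pmax p Y") (simp_all; blast)+
  qed
qed

lemma B_step_exists: "finite Y \<Longrightarrow> \<exists>Y'. B_step p g j Y Y'"
proof -
  assume fin: "finite Y"
  obtain W5 where W5: "step5_W p Y (p j) W5"
    using step5_W_exists[OF fin] by blast
  show ?thesis
  proof (cases "3/4 \<le> p j")
    case True
    then obtain W where "longest_prefix_le p Y (3/4 * p j) W"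
      using longest_prefix_le_exists[OF fin, of "3/4 * p j" p] by auto
    then show ?thesis
      unfolding B_step_def using W5 by (cases "5/4 < load p Y - load p W + p j") auto
  next
    case False
    then show ?thesis
      unfolding B_step_def using W5 by auto
  qed
qed

lemma B_step_finite: "finite Y \<Longrightarrow> B_step p g j Y Y' \<Longrightarrow> finite Y'"
  unfolding B_step_def by (auto split: if_splits)

lemma B_run_exists: "\<exists>Ys. B_run p g n Ys \<and> finite (Ys n)"
proof (induction n)
  case 0
  show ?case
    by (rule exI[of _ "\<lambda>_. {}"]) (simp add: B_run_def)
next
  case (Suc n)
  then obtain Ys where run: "B_run p g n Ys" and fin: "finite (Ys n)"
    by blast
  obtain Y' where step: "B_step p g n (Ys n) Y'"
    using B_step_exists[OF fin] by blast
  have "B_run p g (Suc n) (Ys(Suc n := Y'))"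
    using run step by (auto simp: B_run_def less_Suc_eq)
  moreover have "finite Y'"
    using B_step_finite[OF fin step] .
  ultimately show ?case
    by (metis fun_upd_same)
qed

lemma sorted_desc_take_ge:
  fixes p :: "'a \<Rightarrow> 'b::preorder"
  assumes "sorted_wrt (\<lambda>a b. p a \<ge> p b) ys" "k < length ys" "i \<in> set (take (Suc k) ys)"
  shows "p (ys ! k) \<le> p i"
proof -
  obtain m where "m < Suc k" "i = ys ! m"
    using assms(2,3) by (auto simp: in_set_conv_nth)
  then show ?thesis
    using sorted_wrt_nth_less[OF assms(1) _ assms(2)] by (cases "m = k") auto
qed

text \<open>The witness S is W extended by the next job of the sorted list.\<close>

lemma longest_prefix_le_props:
  assumes "longest_prefix_le p Y c W"
  shows "W \<subseteq> Y" and "load p W \<le> c"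
    and "W = Y \<or> (\<exists>S\<subseteq>Y. c < load p S \<and> (\<forall>i\<in>S. load p S - load p W \<le> p i))"
proof -
  obtain ys k where ys: "sorted_desc p Y ys" and k: "k \<le> length ys"
    and le: "sum_list (map p (take k ys)) \<le> c"
    and beyond: "\<forall>k'. k < k' \<and> k' \<le> length ys \<longrightarrow> c < sum_list (map p (take k' ys))"
    and W: "W = set (take k ys)"
    using assms unfolding longest_prefix_le_def by blast
  have dist: "distinct ys" and Y: "set ys = Y" and sorted: "sorted_wrt (\<lambda>a b. p a \<ge> p b) ys"
    using ys unfolding sorted_desc_def by auto
  have load_take: "load p (set (take m ys)) = sum_list (map p (take m ys))" for m
    using dist by (simp add: load_set)
  show "W \<subseteq> Y"
    using W Y set_take_subset by fastforce
  show "load p W \<le> c"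
    using W le load_take by simp
  show "W = Y \<or> (\<exists>S\<subseteq>Y. c < load p S \<and> (\<forall>i\<in>S. load p S - load p W \<le> p i))"
  proof (cases "k = length ys")
    case True
    then show ?thesis
      using W Y by simp
  next
    case False
    then have "k < length ys"
      using k by simp
    define S where "S = set (take (Suc k) ys)"
    have "S \<subseteq> Y"
      using S_def Y set_take_subset by fastforce
    moreover have "load p S = load p W + p (ys ! k)"
    proof -
      have "load p S = sum_list (map p (take (Suc k) ys))"
        unfolding S_def by (rule load_take)
      then show ?thesis
        using \<open>k < length ys\<close> W load_take by (simp add: take_Suc_conv_app_nth)
    qed
    moreover have "c < load p S"
      using beyond \<open>k < length ys\<close> S_def load_take by simp
    ultimately show ?thesis
      using sorted_desc_take_ge[OF sorted \<open>k < length ys\<close>] S_def by auto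
  qed
qed

lemma shortest_prefix_ge_props:
  assumes "shortest_prefix_ge p Y c W" and "0 < c" and "\<And>i. i \<in> Y \<Longrightarrow> p i \<le> m"
  shows "W \<subseteq> Y" and "c \<le> load p W \<and> load p W < c + m \<or> load p Y < c"
proof -
  obtain ys k where ys: "sorted_desc p Y ys" and k: "k \<le> length ys"
    and cases: "c \<le> sum_list (map p (take k ys)) \<and> (\<forall>k'<k. sum_list (map p (take k' ys)) < c)
      \<or> sum_list (map p ys) < c \<and> k = length ys"
    and W: "W = set (take k ys)"
    using assms(1) unfolding shortest_prefix_ge_def by blast
  have dist: "distinct ys" and Y: "set ys = Y"
    using ys unfolding sorted_desc_def by auto
  have load_take: "load p (set (take m ys)) = sum_list (map p (take m ys))" for m
    using dist by (simp add: load_set)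
  show "W \<subseteq> Y"
    using W Y set_take_subset by fastforce
  from cases show "c \<le> load p W \<and> load p W < c + m \<or> load p Y < c"
  proof
    assume first: "c \<le> sum_list (map p (take k ys)) \<and> (\<forall>k'<k. sum_list (map p (take k' ys)) < c)"
    then obtain k0 where k0: "k = Suc k0"
      using \<open>0 < c\<close> by (cases k) auto
    then have "k0 < length ys"
      using k by simp
    then have "load p W = sum_list (map p (take k0 ys)) + p (ys ! k0)"
      using W k0 load_take[of k] by (simp add: take_Suc_conv_app_nth)
    moreover have "p (ys ! k0) \<le> m"
      using assms(3) nth_mem[OF \<open>k0 < length ys\<close>] Y by blast
    ultimately show ?thesis
      using first k0 W load_take by force
  next
    assume "sum_list (map p ys) < c \<and> k = length ys"
    then show ?thesis
      using load_set[OF dist, of p] Y by simp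
  qed
qed

subsection \<open>A single step of Algorithm B\<close>

text \<open>A certificate that Step 4 or Step 5 leaves the GoS-2 job j on m1: in Step 4 a set of
  jobs on m2 too heavy to migrate, each too large to share a machine with j in a schedule of
  makespan 1; in Step 5 a job on m2 that together with j exceeds 5/4.\<close>

definition rejected :: "(nat \<Rightarrow> real) \<Rightarrow> (nat \<Rightarrow> nat) \<Rightarrow> nat \<Rightarrow> nat set \<Rightarrow> bool" where
  "rejected p g j Y \<longleftrightarrow> g j = 2 \<and> 5/4 < load p Y + p j \<and>
     (3/4 \<le> p j \<and> (\<exists>S\<subseteq>Y. 3/4 * p j < load p S \<and> (\<forall>i\<in>S. 1 - p j < p i))
      \<or> p j < 3/4 \<and> (\<exists>i\<in>Y. 5/4 < p i + p j))"

lemma step4_rejection_witness: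
  assumes W: "longest_prefix_le p Y (3/4 * pj) W"
    and "load p Y < 3/4" "3/4 \<le> pj" "pj \<le> 1" and over: "5/4 < load p Y - load p W + pj"
  shows "\<exists>S\<subseteq>Y. 3/4 * pj < load p S \<and> (\<forall>i\<in>S. 1 - pj < p i)"
proof -
  have "W \<noteq> Y"
    using over \<open>pj \<le> 1\<close> by auto
  then obtain S where "S \<subseteq> Y" "3/4 * pj < load p S" "\<forall>i\<in>S. load p S - load p W \<le> p i"
    using longest_prefix_le_props(3)[OF W] by blast
  moreover have "1 - pj < load p S - load p W"
    using \<open>3/4 * pj < load p S\<close> over assms(2,3) by linarith
  ultimately show ?thesis
    by force
qed

lemma step5_W_props:
  assumes fin: "finite Y" and y: "load p Y < 3/4" and over: "5/4 < load p Y + pj"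
    and small: "pj < 3/4" and fits: "pj + pmax p Y \<le> 5/4" and W: "step5_W p Y pj W"
  shows "W \<subseteq> Y" and "load p W \<le> 3/4 * pj"
    and "3/4 \<le> load p Y - load p W + pj" and "load p Y - load p W + pj \<le> 5/4"
proof -
  have "1/2 < pj"
    using y over by simp
  have "W \<subseteq> Y \<and> load p W \<le> 3/4 * pj \<and> 3/4 \<le> load p Y - load p W + pj
    \<and> load p Y - load p W + pj \<le> 5/4"
  proof (cases "load p Y / 2 \<le> pmax p Y")
    case True
    have "Y \<noteq> {}"
      using over small by (auto simp: load_def)
    with True W obtain jm where "jm \<in> Y" "p jm = pmax p Y" "W = Y - {jm}"
      unfolding step5_W_def by auto
    moreover from this have "load p W = load p Y - pmax p Y"
      using load_diff[OF fin, of "{jm}" p] by (simp add: load_def)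
    ultimately show ?thesis
      using True \<open>1/2 < pj\<close> fits y over by auto
  next
    case not_half: False
    show ?thesis
    proof (cases "1/4 \<le> pmax p Y")
      case True
      with not_half W obtain jm where "jm \<in> Y" "p jm = pmax p Y" "W = {jm}"
        unfolding step5_W_def by auto
      then show ?thesis
        using True not_half \<open>1/2 < pj\<close> y over small by (auto simp: load_def)
    next
      case False
      with not_half W obtain W0 where W0: "shortest_prefix_ge p Y (1/4) W0"
        and W_def: "W = (if 3/4 * pj < load p W0 then Y - W0 else W0)"
        unfolding step5_W_def by auto
      have "W0 \<subseteq> Y" and "1/4 \<le> load p W0 \<and> load p W0 < 1/4 + pmax p Y \<or> load p Y < 1/4"
        using shortest_prefix_ge_props[OF W0 _ pmax_ge[OF fin]] by simp_all
      then have "1/4 \<le> load p W0" "load p W0 < 1/2"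
        using False over small by auto
      then show ?thesis
        using W_def load_diff[OF fin \<open>W0 \<subseteq> Y\<close>] \<open>W0 \<subseteq> Y\<close> \<open>1/2 < pj\<close> y over small
        by (cases "3/4 * pj < load p W0") auto
    qed
  qed
  then show "W \<subseteq> Y" "load p W \<le> 3/4 * pj"
    "3/4 \<le> load p Y - load p W + pj" "load p Y - load p W + pj \<le> 5/4"
    by auto
qed

lemma B_step_frozen: "3/4 \<le> load p Y \<Longrightarrow> B_step p g j Y Y' \<Longrightarrow> Y' = Y"
  by (simp add: B_step_def)

lemma load_insert_diff:
  "finite Y \<Longrightarrow> j \<notin> Y \<Longrightarrow> W \<subseteq> Y \<Longrightarrow> load p (insert j (Y - W)) = load p Y - load p W + p j"
  using load_insert[of "Y - W" j p] load_diff[of Y W p] by simp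

lemma B_step4_cases:
  fixes p :: "nat \<Rightarrow> real"
  assumes fin: "finite Y" and j: "j \<notin> Y" and pos: "\<forall>i\<in>Y. 0 < p i"
    and g2: "g j = 2" and y: "load p Y < 3/4" and over: "5/4 < load p Y + p j"
    and big: "3/4 \<le> p j" and pj: "p j \<le> 1" and step: "B_step p g j Y Y'"
  obtains (reject) "Y' = Y" "rejected p g j Y"
    | (migrate) W where "W \<subseteq> Y" "Y' = insert j (Y - W)" "load p W \<le> 3/4 * p j"
        "3/4 \<le> load p Y'" "load p Y' \<le> 5/4"
proof -
  from step g2 y over big obtain W where W: "longest_prefix_le p Y (3/4 * p j) W"
    and Y': "if 5/4 < load p Y - load p W + p j then Y' = Y else Y' = insert j (Y - W)"
    by (auto simp: B_step_def)
  note WY = longest_prefix_le_props(1)[OF W]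
  show thesis
  proof (cases "5/4 < load p Y - load p W + p j")
    case True
    then have "rejected p g j Y"
      using step4_rejection_witness[OF W y big pj] g2 over big unfolding rejected_def by auto
    with Y' True show thesis
      by (intro reject) auto
  next
    case False
    have "load p W \<le> load p Y"
      using load_mono[OF fin WY] pos by (simp add: less_imp_le)
    with Y' False show thesis
      using longest_prefix_le_props(2)[OF W] load_insert_diff[OF fin j WY] big
      by (intro migrate[OF WY]) auto
  qed
qed

lemma B_step5_cases:
  fixes p :: "nat \<Rightarrow> real"
  assumes fin: "finite Y" and j: "j \<notin> Y"
    and g2: "g j = 2" and y: "load p Y < 3/4" and over: "5/4 < load p Y + p j"
    and small: "p j < 3/4" and step: "B_step p g j Y Y'"
  obtains (reject) "Y' = Y" "rejected p g j Y"
    | (migrate) W where "W \<subseteq> Y" "Y' = insert j (Y - W)" "load p W \<le> 3/4 * p j"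
        "3/4 \<le> load p Y'" "load p Y' \<le> 5/4"
proof (cases "5/4 < p j + pmax p Y")
  case True
  have "Y \<noteq> {}"
    using True small by auto
  then obtain i where "i \<in> Y" "p i = pmax p Y"
    using pmax_attained[OF fin] by blast
  with True g2 over small have "rejected p g j Y"
    unfolding rejected_def by (auto intro!: bexI[of _ i])
  with step g2 y over small True show thesis
    by (intro reject) (auto simp: B_step_def)
next
  case False
  with step g2 y over small obtain W where W: "step5_W p Y (p j) W"
    and Y': "Y' = insert j (Y - W)"
    by (auto simp: B_step_def)
  note props = step5_W_props[OF fin y over small _ W]
  show thesis
    using props False load_insert_diff[OF fin j props(1)] Y'
    by (intro migrate[OF props(1) Y']) auto
qed

lemma B_step_cases:
  fixes p :: "nat \<Rightarrow> real"
  assumes Y: "Y \<subseteq> {..<j}" and pos: "\<forall>i\<in>Y. 0 < p i" and pj: "p j \<le> 1"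
    and gj: "g j \<in> {1, 2}" and step: "B_step p g j Y Y'"
  obtains (keep) "Y' = Y" "g j = 1 \<or> 3/4 \<le> load p Y \<or> rejected p g j Y"
    | (add) "Y' = insert j Y" "g j = 2" "load p Y' \<le> 5/4"
    | (swap) W where "W \<subseteq> Y" "Y' = insert j (Y - W)" "g j = 2" "load p W \<le> 3/4 * p j"
        "3/4 \<le> load p Y'" "load p Y' \<le> 5/4"
proof -
  have fin: "finite Y" and j: "j \<notin> Y"
    using Y finite_subset by auto
  consider (frozen) "g j = 1 \<or> 3/4 \<le> load p Y"
    | (fits) "g j = 2" "load p Y < 3/4" "load p Y + p j \<le> 5/4"
    | (big) "g j = 2" "load p Y < 3/4" "5/4 < load p Y + p j" "3/4 \<le> p j"
    | (small) "g j = 2" "load p Y < 3/4" "5/4 < load p Y + p j" "p j < 3/4"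
    using gj by force
  then show thesis
  proof cases
    case frozen
    with step show thesis
      by (intro keep) (auto simp: B_step_def)
  next
    case fits
    with step show thesis
      by (intro add) (auto simp: B_step_def load_insert[OF fin j])
  next
    case big
    from fin j pos big pj step show thesis
    proof (cases rule: B_step4_cases)
      case (migrate W)
      with big show thesis
        by (intro swap[of W]) simp_all
    qed (use keep in simp)
  next
    case small
    from fin j small step show thesis
    proof (cases rule: B_step5_cases)
      case (migrate W)
      with small show thesis
        by (intro swap[of W]) simp_all
    qed (use keep in simp)
  qed
qed

lemma migrated_self: "migrated p j Y Y = 0"
  by (simp add: migrated_def load_def)

lemma migrated_swap: "W \<subseteq> Y \<Longrightarrow> Y \<subseteq> {..<j} \<Longrightarrow> migrated p j Y (insert j (Y - W)) = load p W"
proof -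
  assume "W \<subseteq> Y" "Y \<subseteq> {..<j}"
  then have "{i. i < j \<and> (i \<in> Y \<longleftrightarrow> i \<notin> insert j (Y - W))} = W"
    by auto
  then show ?thesis
    unfolding migrated_def by simp
qed

lemma B_step_invariant:
  fixes p :: "nat \<Rightarrow> real"
  assumes Y: "Y \<subseteq> {..<j}" "\<forall>i\<in>Y. g i = 2" "load p Y \<le> 5/4"
    and pos: "\<forall>i\<in>Y. 0 < p i" "0 < p j" and pj: "p j \<le> 1"
    and gj: "g j \<in> {1, 2}" and step: "B_step p g j Y Y'"
  shows "Y' \<subseteq> {..<Suc j}" and "\<forall>i\<in>Y'. g i = 2" and "load p Y' \<le> 5/4"
    and "migrated p j Y Y' \<le> 3/4 * p j"
proof -
  from Y(1) pos(1) pj gj step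
  have "Y' \<subseteq> {..<Suc j} \<and> (\<forall>i\<in>Y'. g i = 2) \<and> load p Y' \<le> 5/4
    \<and> migrated p j Y Y' \<le> 3/4 * p j"
  proof (cases rule: B_step_cases)
    case keep
    then show ?thesis
      using Y pos(2) by (auto simp: migrated_self)
  next
    case add
    then show ?thesis
      using Y pos(2) migrated_swap[of "{}" Y j p] by (auto simp: load_def)
  next
    case (swap W)
    then show ?thesis
      using Y migrated_swap[OF swap(1) Y(1)] by auto
  qed
  then show "Y' \<subseteq> {..<Suc j}" "\<forall>i\<in>Y'. g i = 2" "load p Y' \<le> 5/4"
    "migrated p j Y Y' \<le> 3/4 * p j"
    by auto
qed

subsection \<open>Runs compared with a schedule of makespan at most one\<close>

lemma opt_makespan_attained: "\<exists>S. feasible g n S \<and> makespan p n S = opt_makespan p g n"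
proof -
  have "finite {S. feasible g n S}"
    by (rule finite_subset[of _ "Pow {..<n}"]) (auto simp: feasible_def)
  moreover have "feasible g n {}"
    by (simp add: feasible_def)
  ultimately have "opt_makespan p g n \<in> makespan p n ` {S. feasible g n S}"
    unfolding opt_makespan_def by (intro Min_in) auto
  then show ?thesis
    by auto
qed

locale B_run_vs_schedule =
  fixes p :: "nat \<Rightarrow> real" and g :: "nat \<Rightarrow> nat" and n :: nat
    and S :: "nat set" and Ys :: "nat \<Rightarrow> nat set"
  assumes valid: "\<forall>i<n. 0 < p i \<and> g i \<in> {1, 2}"
    and S_feasible: "feasible g n S" and S_makespan: "makespan p n S \<le> 1"
    and run: "B_run p g n Ys"
begin

lemma job_pos: "i < n \<Longrightarrow> 0 < p i"
  using valid by auto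

lemma one_machine_load_le_1:
  assumes "A \<subseteq> S \<or> A \<subseteq> {..<n} - S"
  shows "load p A \<le> 1"
proof -
  have "S \<subseteq> {..<n}"
    using S_feasible by (simp add: feasible_def)
  then have "finite S" "\<And>i. i \<in> S \<Longrightarrow> 0 \<le> p i" "\<And>i. i \<in> {..<n} - S \<Longrightarrow> 0 \<le> p i"
    using finite_subset job_pos by (auto simp: less_imp_le)
  with assms have "load p A \<le> load p S \<or> load p A \<le> load p ({..<n} - S)"
    using load_mono[of S A p] load_mono[of "{..<n} - S" A p] by blast
  then show ?thesis
    using S_makespan by (auto simp: makespan_def)
qed

lemma job_pos_below: "i \<in> Y \<Longrightarrow> Y \<subseteq> {..<j} \<Longrightarrow> j \<le> n \<Longrightarrow> 0 < p i"
  using job_pos by auto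

lemma job_le_1: "j < n \<Longrightarrow> p j \<le> 1"
  using one_machine_load_le_1[of "{j}"] by (cases "j \<in> S") (auto simp: load_def)

lemma same_machine_pair_le_1:
  "a \<noteq> b \<Longrightarrow> a < n \<Longrightarrow> b < n \<Longrightarrow> (a \<in> S \<longleftrightarrow> b \<in> S) \<Longrightarrow> p a + p b \<le> 1"
  using one_machine_load_le_1[of "{a, b}"] by (cases "a \<in> S") (auto simp: load_def)

lemma no_three_big_jobs:
  assumes "i < n" "j < n" "k < n" "distinct [i, j, k]"
    and "1/2 < p i" "1/2 < p j" "1/2 < p k"
  shows False
  using same_machine_pair_le_1[of i j] same_machine_pair_le_1[of i k]
    same_machine_pair_le_1[of j k] assms
  by auto

lemma load_le_2:
  assumes "A \<subseteq> {..<n}"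
  shows "load p A \<le> 2"
proof -
  have "finite A"
    using assms finite_subset by blast
  then have "load p A = load p (A \<inter> S) + load p (A - S)"
    unfolding load_def by (rule sum.Int_Diff)
  then show ?thesis
    using one_machine_load_le_1[of "A \<inter> S"] one_machine_load_le_1[of "A - S"] assms by fastforce
qed

definition gos1 :: "nat set" where
  "gos1 = {i. i < n \<and> g i = 1}"

lemma gos1_plus_load_le_1:
  assumes T: "T \<subseteq> {..<n} - S" "\<forall>i\<in>T. g i = 2"
  shows "load p gos1 + load p T \<le> 1"
proof -
  have "gos1 \<subseteq> {..<n} - S"
    using S_feasible by (auto simp: gos1_def feasible_def)
  with T have "load p (gos1 \<union> T) \<le> 1"
    by (intro one_machine_load_le_1) auto
  moreover have "gos1 \<inter> T = {}"
    using T(2) by (auto simp: gos1_def)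
  moreover have "finite T"
    using T(1) by (meson Diff_subset finite_lessThan finite_subset)
  ultimately show ?thesis
    using load_union[of gos1 T p] by (simp add: gos1_def)
qed

lemma run_step: "j < n \<Longrightarrow> B_step p g j (Ys j) (Ys (Suc j))"
  using run by (simp add: B_run_def)

lemma run_step_invariant:
  assumes "j < n" and Y: "Ys j \<subseteq> {..<j}" "\<forall>i\<in>Ys j. g i = 2" "load p (Ys j) \<le> 5/4"
  shows "Ys (Suc j) \<subseteq> {..<Suc j}" and "\<forall>i\<in>Ys (Suc j). g i = 2"
    and "load p (Ys (Suc j)) \<le> 5/4" and "migrated p j (Ys j) (Ys (Suc j)) \<le> 3/4 * p j"
proof -
  have pos: "\<forall>i\<in>Ys j. 0 < p i"
    using Y(1) \<open>j < n\<close> job_pos_below by auto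
  have "0 < p j" "p j \<le> 1" "g j \<in> {1, 2}"
    using \<open>j < n\<close> job_pos job_le_1 valid by simp_all
  note step_inv = B_step_invariant[OF Y pos this run_step[OF \<open>j < n\<close>]]
  show "Ys (Suc j) \<subseteq> {..<Suc j}" "\<forall>i\<in>Ys (Suc j). g i = 2"
    "load p (Ys (Suc j)) \<le> 5/4" "migrated p j (Ys j) (Ys (Suc j)) \<le> 3/4 * p j"
    by (fact step_inv)+
qed

lemma run_invariant:
  "j \<le> n \<Longrightarrow> Ys j \<subseteq> {..<j} \<and> (\<forall>i\<in>Ys j. g i = 2) \<and> load p (Ys j) \<le> 5/4"
proof (induction j)
  case 0
  then show ?case
    using run by (simp add: B_run_def load_def)
next
  case (Suc j)
  then show ?case
    using run_step_invariant(1-3)[of j] by simp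
qed

lemma run_migration: "j < n \<Longrightarrow> migrated p j (Ys j) (Ys (Suc j)) \<le> 3/4 * p j"
  using run_step_invariant(4) run_invariant[of j] by simp

lemma run_frozen:
  assumes "3/4 \<le> load p (Ys j)" "j \<le> k" "k \<le> n"
  shows "Ys k = Ys j"
  using assms(2,3)
proof (induction k rule: dec_induct)
  case base
  then show ?case
    by simp
next
  case (step k)
  then show ?case
    using B_step_frozen[OF _ run_step] assms(1) by simp
qed

end

locale B_low_run = B_run_vs_schedule +
  assumes low: "load p (Ys n) < 3/4"
begin

lemma low_everywhere: "j \<le> n \<Longrightarrow> load p (Ys j) < 3/4"
  using run_frozen[of j n] low by force

text \<open>Steps 4 and 5 would raise the load of m2 to at least 3/4, so they never place a job.\<close>

lemma low_step:
  assumes "j < n"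
  shows "Ys (Suc j) = insert j (Ys j) \<or> Ys (Suc j) = Ys j \<and> (g j = 1 \<or> rejected p g j (Ys j))"
proof -
  have Y: "Ys j \<subseteq> {..<j}"
    using run_invariant[of j] assms by simp
  have "\<forall>i\<in>Ys j. 0 < p i" "p j \<le> 1" "g j \<in> {1, 2}"
    using job_pos_below[OF _ Y] job_le_1 valid assms by auto
  with Y show ?thesis
    using run_step[OF assms]
  proof (cases rule: B_step_cases)
    case (swap W)
    then show ?thesis
      using low_everywhere[of "Suc j"] assms by simp
  qed (use low_everywhere[of j] assms in auto)
qed

lemma run_mono:
  assumes "j \<le> k" "k \<le> n"
  shows "Ys j \<subseteq> Ys k"
  using assms
proof (induction k rule: dec_induct)
  case (step k)
  then show ?case
    using low_step[of k] by auto
qed simp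

lemma gos2_on_m1_rejected:
  assumes "j < n" "g j = 2" "j \<notin> Ys n"
  shows "rejected p g j (Ys j)"
proof -
  have "j \<notin> Ys (Suc j)"
    using run_mono[of "Suc j" n] assms by auto
  then show ?thesis
    using low_step[OF assms(1)] assms(2) by auto
qed

lemma rejected_big: "j \<le> n \<Longrightarrow> rejected p g j (Ys j) \<Longrightarrow> 1/2 < p j"
  using low_everywhere[of j] by (auto simp: rejected_def)

lemma no_two_gos2_on_m1:
  assumes "j < k" and j: "g j = 2" "j \<notin> Ys n" and k: "k < n" "g k = 2" "k \<notin> Ys n"
  shows False
proof -
  have rejected_j: "rejected p g j (Ys j)" and rejected_k: "rejected p g k (Ys k)"
    using gos2_on_m1_rejected \<open>j < k\<close> j k by simp_all
  then have big: "1/2 < p j" "1/2 < p k"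
    using rejected_big \<open>j < k\<close> k by simp_all
  have Yk: "Ys k \<subseteq> {..<k}" "Ys j \<subseteq> Ys k" "Ys k \<subseteq> Ys n"
    using run_invariant[of k] run_mono[of j k] run_mono[of k n] \<open>j < k\<close> k by auto
  show False
  proof (cases "3/4 \<le> p j \<and> 3/4 \<le> p k")
    case True
    then obtain T where T: "T \<subseteq> Ys k" "3/4 * p k < load p T"
      using rejected_k unfolding rejected_def by auto
    have fin: "finite (Ys k)"
      using Yk(1) finite_subset by blast
    have "j \<notin> insert k (Ys k)"
      using \<open>j < k\<close> Yk(3) j(2) by auto
    then have "load p (insert j (insert k (Ys k))) = p j + (p k + load p (Ys k))"
      using load_insert[OF fin, of k p] load_insert[of "insert k (Ys k)" j p] fin Yk(1) by auto
    moreover have "load p T \<le> load p (Ys k)"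
      using load_mono[OF fin T(1)] job_pos_below[OF _ Yk(1)] k by (simp add: less_imp_le)
    moreover have "load p (insert j (insert k (Ys k))) \<le> 2"
      using Yk(1) \<open>j < k\<close> k by (intro load_le_2) auto
    ultimately show False
      using True T(2) by linarith
  next
    case False
    \<comment> \<open>The certificate of a rejected job below 3/4 is a third job larger than 1/2.\<close>
    have "\<exists>i\<in>Ys k. 1/2 < p i"
    proof (cases "p k < 3/4")
      case True
      then obtain i where "i \<in> Ys k" "5/4 < p i + p k"
        using rejected_k unfolding rejected_def by auto
      with True show ?thesis
        by force
    next
      case small_k: False
      with False have "p j < 3/4"
        by simp
      then obtain i where "i \<in> Ys j" "5/4 < p i + p j"
        using rejected_j unfolding rejected_def by auto
      with \<open>p j < 3/4\<close> Yk(2) show ?thesis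
        by force
    qed
    then obtain i where "i \<in> Ys k" "1/2 < p i"
      by blast
    moreover from \<open>i \<in> Ys k\<close> have "i < k" "i \<noteq> j"
      using Yk j(2) by auto
    ultimately show False
      using no_three_big_jobs[of i j k] big \<open>j < k\<close> k(1) by simp
  qed
qed

lemma gos2_on_m1_unique:
  assumes "j < n" "g j = 2" "j \<notin> Ys n" and "k < n" "g k = 2" "k \<notin> Ys n"
  shows "j = k"
  using no_two_gos2_on_m1[of j k] no_two_gos2_on_m1[of k j] assms by (cases j k rule: linorder_cases) auto

lemma gos2_on_m1_load_bound:
  assumes j: "j < n" "g j = 2" "j \<notin> Ys n"
  shows "load p gos1 + p j \<le> 5/4"
proof -
  have rejected_j: "rejected p g j (Ys j)"
    using gos2_on_m1_rejected j by simp
  have Yj: "Ys j \<subseteq> {..<j}" "\<forall>i\<in>Ys j. g i = 2"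
    using run_invariant[of j] j(1) by simp_all
  show ?thesis
  proof (cases "j \<in> S")
    case False
    then show ?thesis
      using gos1_plus_load_le_1[of "{j}"] j by (simp add: load_def)
  next
    case True
    \<comment> \<open>Jobs on m2 that do not fit with j on one machine lie on the other machine of S,
      together with all GoS-1 jobs.\<close>
    have apart: "load p gos1 + load p T \<le> 1" if "T \<subseteq> Ys j" "\<forall>i\<in>T. 1 < p i + p j" for T
    proof (rule gos1_plus_load_le_1)
      show "T \<subseteq> {..<n} - S"
        using same_machine_pair_le_1[of _ j] that True Yj(1) j(1) by fastforce
    qed (use that Yj(2) in blast)
    show ?thesis
    proof (cases "p j < 3/4")
      case True
      then obtain i where "i \<in> Ys j" "5/4 < p i + p j"
        using rejected_j unfolding rejected_def by auto
      with apart[of "{i}"] True show ?thesis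
        by (simp add: load_def)
    next
      case False
      then obtain T where "T \<subseteq> Ys j" "3/4 * p j < load p T" "\<forall>i\<in>T. 1 < p i + p j"
        using rejected_j unfolding rejected_def by force
      with apart[of T] job_le_1[OF j(1)] show ?thesis
        by linarith
    qed
  qed
qed

lemma m1_load_low: "load p ({..<n} - Ys n) \<le> 5/4"
proof -
  have on_m1: "{..<n} - Ys n = gos1 \<union> {j. j < n \<and> g j = 2 \<and> j \<notin> Ys n}"
    using valid run_invariant[of n] by (auto simp: gos1_def)
  show ?thesis
  proof (cases "\<exists>j<n. g j = 2 \<and> j \<notin> Ys n")
    case True
    then obtain j where j: "j < n" "g j = 2" "j \<notin> Ys n"
      by blast
    with on_m1 have "{..<n} - Ys n = insert j gos1"
      using gos2_on_m1_unique[OF j] by blast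
    moreover have "j \<notin> gos1" "finite gos1"
      using j by (simp_all add: gos1_def)
    ultimately show ?thesis
      using gos2_on_m1_load_bound[OF j] load_insert[of gos1 j p] by simp
  next
    case False
    with on_m1 have "{..<n} - Ys n = gos1"
      by blast
    then show ?thesis
      using gos1_plus_load_le_1[of "{}"] by (simp add: load_def)
  qed
qed

end

context B_run_vs_schedule
begin

lemma run_feasible: "feasible g n (Ys n)"
  using run_invariant[of n] by (simp add: feasible_def)

lemma run_makespan: "makespan p n (Ys n) \<le> 5/4"
proof -
  have Y: "Ys n \<subseteq> {..<n}" "load p (Ys n) \<le> 5/4"
    using run_invariant[of n] by simp_all
  have "load p ({..<n} - Ys n) \<le> 5/4"
  proof (cases "3/4 \<le> load p (Ys n)")
    case True
    then show ?thesis
      using load_diff[OF finite_lessThan Y(1)] load_le_2[of "{..<n}"] by simp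
  next
    case False
    then interpret B_low_run p g n S Ys
      by unfold_locales simp
    show ?thesis
      by (rule m1_load_low)
  qed
  with Y show ?thesis
    by (simp add: makespan_def)
qed

end

theorem mainTheorem5:
  fixes p :: "nat \<Rightarrow> real" and g :: "nat \<Rightarrow> nat" and n :: nat
  assumes valid: "\<forall>i<n. 0 < p i \<and> g i \<in> {1, 2}"
    and opt1: "opt_makespan p g n = 1"
  shows "(\<exists>Ys. B_run p g n Ys)
    \<and> (\<forall>Ys. B_run p g n Ys \<longrightarrow>
          (\<forall>j<n. migrated p j (Ys j) (Ys (Suc j)) \<le> 3/4 * p j)
        \<and> feasible g n (Ys n)
        \<and> makespan p n (Ys n) \<le> 5/4)
    \<and> (\<forall>M::real. M \<ge> 3/4 \<longrightarrow> (\<forall>Ys. B_run p g n Ys \<longrightarrow>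
          (\<forall>j<n. migrated p j (Ys j) (Ys (Suc j)) \<le> M * p j)
        \<and> feasible g n (Ys n)
        \<and> makespan p n (Ys n) / opt_makespan p g n \<le> 5/4))"
proof -
  obtain S where S: "feasible g n S" "makespan p n S \<le> 1"
    using opt_makespan_attained[of g n p] opt1 by auto
  have guarantees: "(\<forall>j<n. migrated p j (Ys j) (Ys (Suc j)) \<le> 3/4 * p j)
      \<and> feasible g n (Ys n) \<and> makespan p n (Ys n) \<le> 5/4" if "B_run p g n Ys" for Ys
  proof -
    interpret B_run_vs_schedule p g n S Ys
      using valid S that by unfold_locales
    show ?thesis
      using run_migration run_feasible run_makespan by simp
  qed
  have "3/4 * p j \<le> M * p j" if "3/4 \<le> M" "j < n" for M j
    using valid that by (simp add: mult_right_mono less_imp_le)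
  then show ?thesis
    using B_run_exists guarantees opt1 by (fastforce intro: order_trans)
qed

end
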